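(* Let $G$ be a plane graph containing no $3$-cycle, $4$-cycle and $5$-cycle that are pairwise adjacent, with a $3$-cycle $C_0$, $s\ge1$, a cover $H$ of $G$ with respect to $L(v)=\{1,\dots,s\}$ for all $v$, $F=(f_1,\dots,f_s)$ with $f_i(v)\in\{0,1,2\}$ and $f_1(v)+\cdots+f_s(v)\ge4$ for all $v$, and a DP-$F$-coloring $R_0$ of $C_0$ that cannot be extended to a DP-$F$-coloring of $(G,H)$, with $|V(G)|$ minimum among all such counterexamples. Let $C=x_1x_2\dots x_m$ be a cycle of $G$ with $V(C)\cap V(C_0)=\emptyset$, let $k\ge1$, and let $K=G[V(C)]$ contain $C$ together with $k-1$ chords of $C$ lying inside $C$, all having the common endpoint $x_1$. Suppose $x_2$ or $x_m$ is not an endpoint of any chord of $C$ in $K$. If $d_G(x_1)\le k+2$ and $d_K(x_1)=k+1$, then there exists $i\in\{2,3,\dots,m\}$ such that $d_G(x_i)\ge5$.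
   Context: Two cycles are adjacent if they share an edge. A cover $H$ of $G$ w.r.t. $L$ has vertex set $\{(u,c):c\in L(u)\}$, each $\{u\}\times L(u)$ is a clique, for each edge $uv$ the edges between $\{u\}\times L(u)$ and $\{v\}\times L(v)$ form a matching, and there are no such edges for non-adjacent $u,v$. A representative set contains exactly one vertex of each $\{v\}\times L(v)$. A DP-$F$-coloring is a representative set $R$ admitting an ordering in which each $(v,i)\in R$ has fewer than $f_i(v)$ $H$-neighbors among earlier elements of $R$; extending $R_0$ means finding a DP-$F$-coloring of $(G,H)$ containing $R_0$ (where $R_0$ is a DP-$F$-coloring with respect to the restriction of $H$ to the vertices over $V(C_0)$). *)

theory Defs
  imports "HOL-Analysis.Analysis"
begin

definition simple_graph :: "'v set \<Rightarrow> 'v set set \<Rightarrow> bool" where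
  "simple_graph V E \<longleftrightarrow> finite V \<and>
     (\<forall>e\<in>E. \<exists>u v. e = {u, v} \<and> u \<noteq> v \<and> u \<in> V \<and> v \<in> V)"

(* Vertices are
   distinct points pos v of the plane (= complex), every edge e is drawn as an
   arc curve e joining the two end points, no arc passes through another
   vertex, and two distinct arcs meet only in common end vertices. *)
definition plane_graph ::
  "'v set \<Rightarrow> 'v set set \<Rightarrow> ('v \<Rightarrow> complex) \<Rightarrow> ('v set \<Rightarrow> real \<Rightarrow> complex) \<Rightarrow> bool" where
  "plane_graph V E pos curve \<longleftrightarrow> simple_graph V E \<and> inj_on pos V \<and>
     (\<forall>e\<in>E. arc (curve e) \<and>
         {pathstart (curve e), pathfinish (curve e)} = pos ` e \<and>
         path_image (curve e) \<inter> pos ` V = pos ` e) \<and>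
     (\<forall>e\<in>E. \<forall>e'\<in>E. e \<noteq> e' \<longrightarrow>
         path_image (curve e) \<inter> path_image (curve e') \<subseteq> pos ` (e \<inter> e'))"

definition is_cycle :: "'v set set \<Rightarrow> 'v list \<Rightarrow> bool" where
  "is_cycle E xs \<longleftrightarrow> length xs \<ge> 3 \<and> distinct xs \<and>
     (\<forall>i < length xs. {xs ! i, xs ! ((i + 1) mod length xs)} \<in> E)"

definition cycle_edges :: "'v list \<Rightarrow> 'v set set" where
  "cycle_edges xs = {{xs ! i, xs ! ((i + 1) mod length xs)} | i. i < length xs}"

definition adjacent_cycles :: "'v list \<Rightarrow> 'v list \<Rightarrow> bool" where
  "adjacent_cycles C D \<longleftrightarrow> cycle_edges C \<inter> cycle_edges D \<noteq> {}"

definition no_adjacent_345 :: "'v set set \<Rightarrow> bool" where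
  "no_adjacent_345 E \<longleftrightarrow> \<not> (\<exists>C3 C4 C5. is_cycle E C3 \<and> is_cycle E C4 \<and> is_cycle E C5 \<and>
      length C3 = 3 \<and> length C4 = 4 \<and> length C5 = 5 \<and>
      adjacent_cycles C3 C4 \<and> adjacent_cycles C3 C5 \<and> adjacent_cycles C4 C5)"

definition degree :: "'v set set \<Rightarrow> 'v \<Rightarrow> nat" where
  "degree E v = card {e \<in> E. v \<in> e}"

definition cycle_image :: "('v set \<Rightarrow> real \<Rightarrow> complex) \<Rightarrow> 'v list \<Rightarrow> complex set" where
  "cycle_image curve xs = (\<Union>e\<in>cycle_edges xs. path_image (curve e))"

definition edge_inside :: "('v \<Rightarrow> complex) \<Rightarrow> ('v set \<Rightarrow> real \<Rightarrow> complex) \<Rightarrow> 'v list \<Rightarrow> 'v set \<Rightarrow> bool" where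
  "edge_inside pos curve C e \<longleftrightarrow> path_image (curve e) - pos ` e \<subseteq> inside (cycle_image curve C)"

(* Cover H of G w.r.t. L(v) = {1..s}; vertices of H are (v,c), c \<in> {1..s};
   HE is the edge set of H. *)
definition dp_cover :: "'v set \<Rightarrow> 'v set set \<Rightarrow> nat \<Rightarrow> ('v \<times> nat) set set \<Rightarrow> bool" where
  "dp_cover V E s HE \<longleftrightarrow>
     (\<forall>h\<in>HE. \<exists>a b. h = {a, b} \<and> a \<noteq> b \<and> fst a \<in> V \<and> fst b \<in> V \<and>
                    snd a \<in> {1..s} \<and> snd b \<in> {1..s}) \<and>
     (\<forall>v\<in>V. \<forall>c\<in>{1..s}. \<forall>c'\<in>{1..s}. c \<noteq> c' \<longrightarrow> {(v, c), (v, c')} \<in> HE) \<and>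
     (\<forall>u\<in>V. \<forall>v\<in>V. u \<noteq> v \<longrightarrow> {u, v} \<notin> E \<longrightarrow> (\<forall>c c'. {(u, c), (v, c')} \<notin> HE)) \<and>
     (\<forall>u\<in>V. \<forall>v\<in>V. u \<noteq> v \<longrightarrow> {u, v} \<in> E \<longrightarrow>
         (\<forall>c c1 c2. {(u, c), (v, c1)} \<in> HE \<longrightarrow> {(u, c), (v, c2)} \<in> HE \<longrightarrow> c1 = c2))"

definition representative :: "'v set \<Rightarrow> nat \<Rightarrow> ('v \<times> nat) set \<Rightarrow> bool" where
  "representative W s R \<longleftrightarrow> R \<subseteq> W \<times> {1..s} \<and> (\<forall>v\<in>W. \<exists>!c. (v, c) \<in> R)"

(* DP-F-coloring over the vertices W (with respect to the restriction of H to the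
   fibres over W); f i v is f_i(v). *)
definition dpF_coloring ::
  "'v set \<Rightarrow> nat \<Rightarrow> ('v \<times> nat) set set \<Rightarrow> (nat \<Rightarrow> 'v \<Rightarrow> nat) \<Rightarrow> ('v \<times> nat) set \<Rightarrow> bool" where
  "dpF_coloring W s HE f R \<longleftrightarrow> representative W s R \<and>
     (\<exists>rs. distinct rs \<and> set rs = R \<and>
        (\<forall>j < length rs. card {r \<in> set (take j rs). {r, rs ! j} \<in> HE}
                            < f (snd (rs ! j)) (fst (rs ! j))))"

definition valid_F :: "'v set \<Rightarrow> nat \<Rightarrow> (nat \<Rightarrow> 'v \<Rightarrow> nat) \<Rightarrow> bool" where
  "valid_F V s f \<longleftrightarrow> (\<forall>v\<in>V. (\<forall>i\<in>{1..s}. f i v \<in> {0, 1, 2}) \<and> (\<Sum>i=1..s. f i v) \<ge> 4)"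

definition counterexample ::
  "'v set \<Rightarrow> 'v set set \<Rightarrow> ('v \<Rightarrow> complex) \<Rightarrow> ('v set \<Rightarrow> real \<Rightarrow> complex) \<Rightarrow> 'v list
   \<Rightarrow> nat \<Rightarrow> ('v \<times> nat) set set \<Rightarrow> (nat \<Rightarrow> 'v \<Rightarrow> nat) \<Rightarrow> ('v \<times> nat) set \<Rightarrow> bool" where
  "counterexample V E pos curve C0 s HE f R0 \<longleftrightarrow>
     plane_graph V E pos curve \<and> no_adjacent_345 E \<and>
     is_cycle E C0 \<and> length C0 = 3 \<and> s \<ge> 1 \<and> dp_cover V E s HE \<and> valid_F V s f \<and>
     dpF_coloring (set C0) s HE f R0 \<and>
     \<not> (\<exists>R. dpF_coloring V s HE f R \<and> R0 \<subseteq> R)"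

definition minimal_counterexample ::
  "'v set \<Rightarrow> 'v set set \<Rightarrow> ('v \<Rightarrow> complex) \<Rightarrow> ('v set \<Rightarrow> real \<Rightarrow> complex) \<Rightarrow> 'v list
   \<Rightarrow> nat \<Rightarrow> ('v \<times> nat) set set \<Rightarrow> (nat \<Rightarrow> 'v \<Rightarrow> nat) \<Rightarrow> ('v \<times> nat) set \<Rightarrow> bool" where
  "minimal_counterexample V E pos curve C0 s HE f R0 \<longleftrightarrow>
     counterexample V E pos curve C0 s HE f R0 \<and>
     (\<forall>(V' :: 'v set) E' pos' curve' C0' s' HE' f' R0'.
        counterexample V' E' pos' curve' C0' s' HE' f' R0' \<longrightarrow> card V \<le> card V')"

end

theory Submission
  imports Defs
begin

(* Suppose x_2, ..., x_m all have degree at most 4. Deleting V(C) leaves a smaller graph that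
   inherits everything but minimality, so R0 extends to a DP-F-coloring of G - V(C). We extend it
   along C one vertex at a time: a vertex v may take color i if fewer than f_i(v) of its colored
   H-neighbors are present. The colored neighbors of v block at most one unit each of the budget
   f_1(v) + ... + f_s(v) >= 4, so a vertex with at most three colored neighbors always has a free
   color; this colors x_m, x_(m-1), ..., x_3 in turn, each having its predecessor still uncolored.
   Now x_1 has at most one neighbor off C, x_2 at most two, and x_2 lies on no chord because every
   chord ends at x_1. Hence x_2 has either two free colors or one with a spare unit, and in either
   case a suitable order places x_1 and x_2 as well, so R0 extends after all. *)

section \<open>Admissible orderings\<close>

definition nbr_count :: "('a \<times> nat) set set \<Rightarrow> ('a \<times> nat) set \<Rightarrow> 'a \<times> nat \<Rightarrow> nat" where
  "nbr_count HE S x = card {r \<in> S. {r, x} \<in> HE}"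

definition admissible_after ::
  "('a \<times> nat) set set \<Rightarrow> (nat \<Rightarrow> 'a \<Rightarrow> nat) \<Rightarrow> ('a \<times> nat) list \<Rightarrow> ('a \<times> nat) list \<Rightarrow> bool" where
  "admissible_after HE f A B \<longleftrightarrow>
     (\<forall>t < length B. nbr_count HE (set A \<union> set (take t B)) (B ! t) < f (snd (B ! t)) (fst (B ! t)))"

lemma dpF_coloring_iff_admissible:
  "dpF_coloring W s HE f R \<longleftrightarrow>
     representative W s R \<and> (\<exists>rs. distinct rs \<and> set rs = R \<and> admissible_after HE f [] rs)"
  unfolding dpF_coloring_def admissible_after_def nbr_count_def by simp

lemma admissible_after_Nil [simp]: "admissible_after HE f A []"
  unfolding admissible_after_def by simp

lemma admissible_after_single:
  "admissible_after HE f A [x] \<longleftrightarrow> nbr_count HE (set A) x < f (snd x) (fst x)"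
  unfolding admissible_after_def by simp

lemma admissible_after_append:
  "admissible_after HE f A (B @ D) \<longleftrightarrow> admissible_after HE f A B \<and> admissible_after HE f (A @ B) D"
proof -
  have split: "(\<forall>t < length (B @ D). P t) \<longleftrightarrow> (\<forall>t < length B. P t) \<and> (\<forall>t < length D. P (length B + t))"
    for P :: "nat \<Rightarrow> bool"
    by (auto, metis add_diff_inverse_nat add_less_cancel_left)
  show ?thesis
    unfolding admissible_after_def split by (simp add: nth_append Un_assoc)
qed

lemma admissible_after_Cons:
  "admissible_after HE f A (x # B) \<longleftrightarrow>
     nbr_count HE (set A) x < f (snd x) (fst x) \<and> admissible_after HE f (A @ [x]) B"
  using admissible_after_append[of HE f A "[x]" B] by (simp add: admissible_after_single)

lemma nbr_count_mono: "finite S' \<Longrightarrow> S \<subseteq> S' \<Longrightarrow> nbr_count HE S x \<le> nbr_count HE S' x"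
  unfolding nbr_count_def by (rule card_mono) auto

lemma nbr_count_Un_le:
  "finite A \<Longrightarrow> finite B \<Longrightarrow> nbr_count HE (A \<union> B) x \<le> nbr_count HE A x + nbr_count HE B x"
  unfolding nbr_count_def by (simp add: Collect_disj_eq conj_disj_distribR card_Un_le)

lemma nbr_count_Un_nonadj:
  "\<forall>y\<in>B. {y, x} \<notin> HE \<Longrightarrow> nbr_count HE (A \<union> B) x = nbr_count HE A x"
  unfolding nbr_count_def by (rule arg_cong[where f = card]) auto

lemma nbr_count_singleton: "nbr_count HE {y} x = (if {y, x} \<in> HE then 1 else 0)"
proof -
  have "{r \<in> {y}. {r, x} \<in> HE} = (if {y, x} \<in> HE then {y} else {})"
    by auto
  then show ?thesis
    unfolding nbr_count_def by simp
qed

lemma admissible_after_insert_nonadj: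
  assumes "admissible_after HE f A B" "set A' = insert y (set A)" "\<forall>x\<in>set B. {y, x} \<notin> HE"
  shows "admissible_after HE f A' B"
proof -
  have "nbr_count HE (set A' \<union> set (take t B)) (B ! t) = nbr_count HE (set A \<union> set (take t B)) (B ! t)"
    if "t < length B" for t
    using nbr_count_Un_nonadj[of "{y}" "B ! t" HE "set A \<union> set (take t B)"] assms(2,3) that
    by (simp add: insert_commute)
  with assms(1) show ?thesis
    unfolding admissible_after_def by simp
qed

lemma admissible_greedy:
  assumes "distinct js"
    and "\<And>t col. t < length js \<Longrightarrow>
           \<exists>i\<in>I. nbr_count HE (set A \<union> (\<lambda>j. (g j, col j)) ` set (take t js)) (g (js ! t), i) < f i (g (js ! t))"
  shows "\<exists>col. admissible_after HE f A (map (\<lambda>j. (g j, col j)) js) \<and> (\<forall>j\<in>set js. col j \<in> I)"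
  using assms
proof (induction js rule: rev_induct)
  case Nil
  then show ?case by simp
next
  case (snoc j js)
  then have "distinct js" "j \<notin> set js" by auto
  have "\<exists>i\<in>I. nbr_count HE (set A \<union> (\<lambda>j. (g j, col j)) ` set (take t js)) (g (js ! t), i)
              < f i (g (js ! t))" if "t < length js" for t col
    using snoc.prems(2)[of t col] that by (simp add: nth_append)
  with snoc.IH[OF \<open>distinct js\<close>] obtain col where
    col: "admissible_after HE f A (map (\<lambda>j. (g j, col j)) js)" "\<forall>j\<in>set js. col j \<in> I"
    by blast
  from snoc.prems(2)[of "length js" col] obtain i where
    i: "i \<in> I" "nbr_count HE (set A \<union> (\<lambda>j. (g j, col j)) ` set js) (g j, i) < f i (g j)"
    by auto
  have same: "map (\<lambda>u. (g u, (col(j := i)) u)) js = map (\<lambda>j. (g j, col j)) js"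
    using \<open>j \<notin> set js\<close> by (intro map_cong) auto
  have "admissible_after HE f A (map (\<lambda>u. (g u, col u)) js @ [(g j, i)])"
    using col(1) i(2) by (simp add: admissible_after_append admissible_after_single)
  then have "admissible_after HE f A (map (\<lambda>u. (g u, (col(j := i)) u)) (js @ [j]))"
    by (simp only: map_append same list.map fun_upd_same)
  moreover have "\<forall>j'\<in>set (js @ [j]). (col(j := i)) j' \<in> I"
    using col(2) i(1) by simp
  ultimately show ?case by blast
qed

lemma representative_inj_on_fst:
  assumes "representative W s R"
  shows "inj_on fst R"
proof (rule inj_onI)
  fix x y assume "x \<in> R" "y \<in> R" "fst x = fst y"
  moreover from \<open>x \<in> R\<close> assms have "fst x \<in> W"
    unfolding representative_def by auto
  with assms have "\<exists>!c. (fst x, c) \<in> R"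
    unfolding representative_def by blast
  ultimately show "x = y"
    by (metis prod.collapse)
qed

lemma representative_of_list:
  assumes "distinct (map fst qs)" "fst ` set qs = W" "snd ` set qs \<subseteq> {1..s}"
  shows "representative W s (set qs)"
  unfolding representative_def
proof (intro conjI ballI)
  show "set qs \<subseteq> W \<times> {1..s}"
    using assms(2,3) by force
  fix v assume "v \<in> W"
  with assms(2) obtain c where "(v, c) \<in> set qs"
    by force
  moreover have "c' = c" if "(v, c') \<in> set qs" for c'
    using assms(1) that \<open>(v, c) \<in> set qs\<close> by (metis distinct_map fst_conv inj_onD prod.inject)
  ultimately show "\<exists>!c. (v, c) \<in> set qs"
    by blast
qed

lemma dpF_coloring_append:
  assumes "representative U s (set rs)" "distinct rs" "admissible_after HE f [] rs"
    and "representative W s (set qs)" "distinct qs" "admissible_after HE f rs qs"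
    and "U \<inter> W = {}"
  shows "dpF_coloring (U \<union> W) s HE f (set (rs @ qs))"
proof -
  have "set rs \<inter> set qs = {}"
    using assms(1,4,7) unfolding representative_def by blast
  then have "distinct (rs @ qs)"
    using assms(2,5) by simp
  moreover have "representative (U \<union> W) s (set (rs @ qs))"
    using assms(1,4,7) unfolding representative_def by auto
  ultimately show ?thesis
    using assms(3,6) unfolding dpF_coloring_iff_admissible
    by (auto intro!: exI[of _ "rs @ qs"] simp: admissible_after_append)
qed

section \<open>Counting blocked colors\<close>

lemma sum_less_sumD:
  fixes g h :: "'a \<Rightarrow> nat"
  assumes "(\<Sum>i\<in>I. g i) < (\<Sum>i\<in>I. h i)"
  shows "\<exists>i\<in>I. g i < h i"
  using assms sum_mono[of I h g] by (meson not_le)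

lemma card_filter_eq_sum: "finite A \<Longrightarrow> card {x \<in> A. P x} = (\<Sum>x\<in>A. if P x then 1 else 0)"
  by (simp add: sum.inter_filter[symmetric])

lemma card_filter_fst_eq:
  "inj_on fst S \<Longrightarrow> card {r \<in> S. P (fst r)} = card {w \<in> fst ` S. P w}"
  by (subst card_image[symmetric]) (auto intro: inj_on_subset intro!: arg_cong[where f = card])

lemma dp_cover_matching:
  assumes "dp_cover V E s HE" "u \<in> V" "v \<in> V" "u \<noteq> v"
    and "{(u, c), (v, c1)} \<in> HE" "{(u, c), (v, c2)} \<in> HE"
  shows "c1 = c2"
  using assms unfolding dp_cover_def by blast

lemma dp_cover_nonadj:
  assumes "dp_cover V E s HE" "u \<in> V" "v \<in> V" "u \<noteq> v" "{u, v} \<notin> E"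
  shows "{(u, c), (v, c')} \<notin> HE"
  using assms unfolding dp_cover_def by blast

lemma card_matched_colors_le:
  assumes "dp_cover V E s HE" "u \<in> V" "v \<in> V" "u \<noteq> v"
  shows "card {c \<in> {1..s}. {(u, b), (v, c)} \<in> HE} \<le> (if {u, v} \<in> E then 1 else 0)"
proof (cases "{u, v} \<in> E")
  case True
  then show ?thesis
    using dp_cover_matching[OF assms, of b] by (auto simp: card_le_Suc0_iff_eq)
next
  case False
  then show ?thesis
    using dp_cover_nonadj[OF assms] by simp
qed

text \<open>Each colored vertex r is matched with at most one vertex of the fibre over v, and only if
  fst r and v are adjacent.\<close>
lemma sum_nbr_count_le:
  assumes dp: "dp_cover V E s HE" and "finite S" "fst ` S \<subseteq> V" "v \<in> V" "v \<notin> fst ` S"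
  shows "(\<Sum>c\<in>{1..s}. nbr_count HE S (v, c)) \<le> card {r \<in> S. {fst r, v} \<in> E}"
proof -
  have "(\<Sum>c\<in>{1..s}. nbr_count HE S (v, c)) = (\<Sum>r\<in>S. card {c \<in> {1..s}. {r, (v, c)} \<in> HE})"
    unfolding nbr_count_def card_filter_eq_sum[OF \<open>finite S\<close>]
      card_filter_eq_sum[OF finite_atLeastAtMost]
    by (rule sum.swap)
  also have "\<dots> \<le> (\<Sum>r\<in>S. if {fst r, v} \<in> E then 1 else 0)"
  proof (rule sum_mono)
    fix r assume "r \<in> S"
    with assms(3,5) have "fst r \<in> V" "fst r \<noteq> v" by force+
    from card_matched_colors_le[OF dp this(1) assms(4) this(2), of "snd r"]
    show "card {c \<in> {1..s}. {r, (v, c)} \<in> HE} \<le> (if {fst r, v} \<in> E then 1 else 0)"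
      by simp
  qed
  also have "\<dots> = card {r \<in> S. {fst r, v} \<in> E}"
    using \<open>finite S\<close> by (simp add: card_filter_eq_sum)
  finally show ?thesis .
qed

lemma card_neighbors_add_le_degree:
  assumes "finite E" "finite W" "finite Y" "W \<inter> Y = {}" "\<forall>y\<in>Y. {y, v} \<in> E"
  shows "card {w \<in> W. {w, v} \<in> E} + card Y \<le> degree E v"
proof -
  have "card {w \<in> W. {w, v} \<in> E} + card Y = card ({w \<in> W. {w, v} \<in> E} \<union> Y)"
    using assms(2-4) by (simp add: card_Un_disjoint disjoint_iff)
  also have "\<dots> \<le> card {e \<in> E. v \<in> e}"
    by (rule card_inj_on_le[where f = "\<lambda>w. {w, v}"])
      (use assms in \<open>auto simp: inj_on_def doubleton_eq_iff\<close>)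
  finally show ?thesis
    unfolding degree_def .
qed

lemma exists_available_color:
  assumes dp: "dp_cover V E s HE" and "valid_F V s f" "finite E"
    and S: "finite S" "fst ` S \<subseteq> V" "inj_on fst S"
    and v: "v \<in> V" "v \<notin> fst ` S" "degree E v \<le> 4"
    and y: "y \<notin> fst ` S" "{y, v} \<in> E"
  shows "\<exists>i\<in>{1..s}. nbr_count HE S (v, i) < f i v"
proof (rule sum_less_sumD)
  have "card {w \<in> fst ` S. {w, v} \<in> E} + card {y} \<le> degree E v"
    using y S \<open>finite E\<close> by (intro card_neighbors_add_le_degree) auto
  then have "card {r \<in> S. {fst r, v} \<in> E} \<le> 3"
    using v(3) card_filter_fst_eq[OF S(3), of "\<lambda>w. {w, v} \<in> E"] by simp
  then have "(\<Sum>i\<in>{1..s}. nbr_count HE S (v, i)) \<le> 3"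
    using sum_nbr_count_le[OF dp S(1,2) v(1,2)] by simp
  moreover have "4 \<le> (\<Sum>i\<in>{1..s}. f i v)"
    using \<open>valid_F V s f\<close> v(1) unfolding valid_F_def by blast
  ultimately show "(\<Sum>i\<in>{1..s}. nbr_count HE S (v, i)) < (\<Sum>i\<in>{1..s}. f i v)"
    by simp
qed

lemma simple_graph_edge_subset:
  assumes "simple_graph V E" "e \<in> E"
  shows "e \<subseteq> V"
proof -
  obtain u v where "e = {u, v}" "u \<in> V" "v \<in> V"
    using assms unfolding simple_graph_def by meson
  then show ?thesis
    by simp
qed

lemma simple_graph_finite_edges:
  assumes "simple_graph V E"
  shows "finite E"
proof (rule finite_subset)
  show "E \<subseteq> Pow V"
    using simple_graph_edge_subset[OF assms] by blast
  show "finite (Pow V)"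
    using assms unfolding simple_graph_def by simp
qed

lemma cycle_edge_mem:
  "is_cycle E C \<Longrightarrow> i < length C \<Longrightarrow> {C ! i, C ! (Suc i mod length C)} \<in> E"
  unfolding is_cycle_def by simp

lemma set_cycle_subset:
  assumes "simple_graph V E" "is_cycle E C"
  shows "set C \<subseteq> V"
proof
  fix x assume "x \<in> set C"
  then obtain i where "i < length C" "x = C ! i"
    by (auto simp: in_set_conv_nth)
  with assms(2) have "{x, C ! (Suc i mod length C)} \<in> E"
    by (simp add: cycle_edge_mem)
  then show "x \<in> V"
    using simple_graph_edge_subset[OF assms(1)] by blast
qed

lemma doubleton_in_cycle_edges_iff:
  assumes "distinct C" "i < length C" "j < length C"
  shows "{C ! i, C ! j} \<in> cycle_edges C \<longleftrightarrow> j = Suc i mod length C \<or> i = Suc j mod length C"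
proof -
  have lt: "Suc k mod length C < length C" for k
    by (rule mod_less_divisor) (use assms(2) in linarith)
  have "{C ! i, C ! j} = {C ! k, C ! (Suc k mod length C)} \<longleftrightarrow>
        (i = k \<and> j = Suc k mod length C) \<or> (j = k \<and> i = Suc k mod length C)" if "k < length C" for k
    using assms that lt[of k] by (auto simp: doubleton_eq_iff nth_eq_iff_index_eq)
  then show ?thesis
    using assms unfolding cycle_edges_def by auto
qed

lemma no_chord_at_second_vertex:
  assumes cyc: "is_cycle E C"
    and chords: "\<forall>e \<in> {e \<in> E. e \<subseteq> set C} - cycle_edges C. C ! 0 \<in> e"
    and j: "3 \<le> j" "j < length C"
  shows "{C ! 1, C ! j} \<notin> E"
proof
  assume edge: "{C ! 1, C ! j} \<in> E"
  have "distinct C"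
    using cyc unfolding is_cycle_def by simp
  have "Suc j mod length C \<noteq> 1"
    using j by (cases "Suc j = length C") auto
  with j have "{C ! 1, C ! j} \<notin> cycle_edges C"
    using doubleton_in_cycle_edges_iff[OF \<open>distinct C\<close>, of 1 j] by simp
  moreover have "{C ! 1, C ! j} \<subseteq> set C"
    using j by simp
  ultimately have "{C ! 1, C ! j} \<in> {e \<in> E. e \<subseteq> set C} - cycle_edges C"
    using edge by simp
  with chords have "C ! 0 \<in> {C ! 1, C ! j}"
    by (rule bspec)
  moreover have "0 < length C" "1 < length C"
    using j by linarith+
  then have "C ! 0 \<noteq> C ! 1" "C ! 0 \<noteq> C ! j"
    using nth_eq_iff_index_eq[OF \<open>distinct C\<close>] j by (metis zero_neq_one, metis not_numeral_le_zero)
  ultimately show False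
    by auto
qed

lemma degree_outside_add_induced_le:
  assumes "finite E" "W \<inter> U = {}" "v \<in> U"
  shows "card {w \<in> W. {w, v} \<in> E} + degree {e \<in> E. e \<subseteq> U} v \<le> degree E v"
proof -
  let ?out = "{e \<in> E. v \<in> e \<and> \<not> e \<subseteq> U}"
  have "card {w \<in> W. {w, v} \<in> E} \<le> card ?out"
    by (rule card_inj_on_le[where f = "\<lambda>w. {w, v}"])
      (use assms in \<open>auto simp: inj_on_def doubleton_eq_iff\<close>)
  moreover have "degree E v = card ?out + degree {e \<in> E. e \<subseteq> U} v"
    unfolding degree_def using assms(1)
    by (subst card_Un_disjoint[symmetric]) (auto intro!: arg_cong[where f = card])
  ultimately show ?thesis
    by simp
qed

section \<open>Deleting vertices from a minimal counterexample\<close>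

lemma simple_graph_induced:
  assumes "simple_graph V E" "U \<subseteq> V"
  shows "simple_graph U {e \<in> E. e \<subseteq> U}"
  unfolding simple_graph_def
proof (intro conjI ballI)
  show "finite U"
    using assms unfolding simple_graph_def by (meson finite_subset)
  fix e assume e: "e \<in> {e \<in> E. e \<subseteq> U}"
  then have "e \<in> E"
    by simp
  then obtain u v where "e = {u, v}" "u \<noteq> v"
    using assms(1) unfolding simple_graph_def by meson
  with e show "\<exists>u v. e = {u, v} \<and> u \<noteq> v \<and> u \<in> U \<and> v \<in> U"
    by auto
qed

lemma plane_graph_induced:
  assumes pg: "plane_graph V E pos curve" and "U \<subseteq> V"
  shows "plane_graph U {e \<in> E. e \<subseteq> U} pos curve"
proof -
  have "path_image (curve e) \<inter> pos ` U = pos ` e" if "e \<in> E" "e \<subseteq> U" for e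
  proof -
    have "path_image (curve e) \<inter> pos ` V = pos ` e"
      using pg that(1) unfolding plane_graph_def by simp
    with that(2) \<open>U \<subseteq> V\<close> show ?thesis
      by blast
  qed
  moreover have "simple_graph V E"
    using pg unfolding plane_graph_def by simp
  then have "simple_graph U {e \<in> E. e \<subseteq> U}"
    using \<open>U \<subseteq> V\<close> by (rule simple_graph_induced)
  moreover have "inj_on pos V"
    using pg unfolding plane_graph_def by simp
  then have "inj_on pos U"
    using \<open>U \<subseteq> V\<close> by (rule inj_on_subset)
  ultimately show ?thesis
    using pg unfolding plane_graph_def by simp
qed

lemma is_cycle_mono: "is_cycle E' C \<Longrightarrow> E' \<subseteq> E \<Longrightarrow> is_cycle E C"
  unfolding is_cycle_def by blast

lemma no_adjacent_345_mono:
  assumes "no_adjacent_345 E" "E' \<subseteq> E"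
  shows "no_adjacent_345 E'"
  using assms is_cycle_mono[OF _ assms(2)] unfolding no_adjacent_345_def by blast

lemma is_cycle_induced:
  assumes "is_cycle E C" "set C \<subseteq> U"
  shows "is_cycle {e \<in> E. e \<subseteq> U} C"
proof -
  have "C ! i \<in> U \<and> C ! (Suc i mod length C) \<in> U" if "i < length C" for i
  proof -
    have "Suc i mod length C < length C"
      using that by (intro mod_less_divisor) linarith
    then show ?thesis
      using nth_mem[OF that] nth_mem assms(2) by blast
  qed
  with assms(1) show ?thesis
    by (simp add: is_cycle_def)
qed

lemma dp_cover_induced:
  assumes dp: "dp_cover V E s HE" and "U \<subseteq> V"
  shows "dp_cover U {e \<in> E. e \<subseteq> U} s {h \<in> HE. \<forall>y\<in>h. fst y \<in> U}"
  unfolding dp_cover_def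
proof (intro conjI ballI allI impI)
  fix h assume h: "h \<in> {h \<in> HE. \<forall>y\<in>h. fst y \<in> U}"
  from dp have "\<forall>h\<in>HE. \<exists>a b. h = {a, b} \<and> a \<noteq> b \<and> fst a \<in> V \<and> fst b \<in> V \<and>
                    snd a \<in> {1..s} \<and> snd b \<in> {1..s}"
    unfolding dp_cover_def by (rule conjunct1)
  with h obtain a b where "h = {a, b}" "a \<noteq> b" "snd a \<in> {1..s}" "snd b \<in> {1..s}"
    by (auto dest!: bspec[of HE _ h])
  with h show "\<exists>a b. h = {a, b} \<and> a \<noteq> b \<and> fst a \<in> U \<and> fst b \<in> U \<and> snd a \<in> {1..s} \<and> snd b \<in> {1..s}"
    by blast
next
  fix v c c' assume "v \<in> U" "c \<in> {1..s}" "c' \<in> {1..s}" "c \<noteq> c'"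
  with dp \<open>U \<subseteq> V\<close> show "{(v, c), (v, c')} \<in> {h \<in> HE. \<forall>y\<in>h. fst y \<in> U}"
    unfolding dp_cover_def by auto
next
  fix u v c c' assume "u \<in> U" "v \<in> U" "u \<noteq> v" "{u, v} \<notin> {e \<in> E. e \<subseteq> U}"
  with \<open>U \<subseteq> V\<close> have "{(u, c), (v, c')} \<notin> HE"
    by (intro dp_cover_nonadj[OF dp]) auto
  then show "{(u, c), (v, c')} \<notin> {h \<in> HE. \<forall>y\<in>h. fst y \<in> U}"
    by simp
next
  fix u v c c1 c2 assume "u \<in> U" "v \<in> U" "u \<noteq> v" "{u, v} \<in> {e \<in> E. e \<subseteq> U}"
    "{(u, c), (v, c1)} \<in> {h \<in> HE. \<forall>y\<in>h. fst y \<in> U}" "{(u, c), (v, c2)} \<in> {h \<in> HE. \<forall>y\<in>h. fst y \<in> U}"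
  with \<open>U \<subseteq> V\<close> show "c1 = c2"
    by (intro dp_cover_matching[OF dp, of u v c]) auto
qed

lemma dpF_coloring_induced_iff:
  assumes "W \<subseteq> U"
  shows "dpF_coloring W s {h \<in> HE. \<forall>y\<in>h. fst y \<in> U} f R \<longleftrightarrow> dpF_coloring W s HE f R"
proof -
  define HU where "HU = {h \<in> HE. \<forall>y\<in>h. fst y \<in> U}"
  have "{r \<in> set (take j rs). {r, rs ! j} \<in> HU} = {r \<in> set (take j rs). {r, rs ! j} \<in> HE}"
    if rep: "representative W s R" and "set rs = R" and j: "j < length rs" for rs j
  proof -
    have "\<forall>r\<in>set rs. fst r \<in> U"
      using rep \<open>set rs = R\<close> assms unfolding representative_def by auto
    with nth_mem[OF j] show ?thesis
      unfolding HU_def by (auto dest: in_set_takeD)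
  qed
  then have "dpF_coloring W s HU f R \<longleftrightarrow> dpF_coloring W s HE f R"
    unfolding dpF_coloring_def by auto
  then show ?thesis
    unfolding HU_def .
qed

lemma counterexample_induced:
  assumes ce: "counterexample V E pos curve C0 s HE f R0" and "set C0 \<subseteq> U" "U \<subseteq> V"
    and "\<not> (\<exists>R. dpF_coloring U s {h \<in> HE. \<forall>y\<in>h. fst y \<in> U} f R \<and> R0 \<subseteq> R)"
  shows "counterexample U {e \<in> E. e \<subseteq> U} pos curve C0 s {h \<in> HE. \<forall>y\<in>h. fst y \<in> U} f R0"
proof -
  from ce have pg: "plane_graph V E pos curve" and no345: "no_adjacent_345 E"
    and C0: "is_cycle E C0" and dp: "dp_cover V E s HE" and valid: "valid_F V s f"
    and R0: "dpF_coloring (set C0) s HE f R0"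
    unfolding counterexample_def by blast+
  have "plane_graph U {e \<in> E. e \<subseteq> U} pos curve"
    using pg assms(3) by (rule plane_graph_induced)
  moreover have "no_adjacent_345 {e \<in> E. e \<subseteq> U}"
    using no345 by (rule no_adjacent_345_mono) blast
  moreover have "is_cycle {e \<in> E. e \<subseteq> U} C0"
    using C0 assms(2) by (rule is_cycle_induced)
  moreover have "dp_cover U {e \<in> E. e \<subseteq> U} s {h \<in> HE. \<forall>y\<in>h. fst y \<in> U}"
    using dp assms(3) by (rule dp_cover_induced)
  moreover have "valid_F U s f"
    using valid assms(3) unfolding valid_F_def by blast
  moreover have "dpF_coloring (set C0) s {h \<in> HE. \<forall>y\<in>h. fst y \<in> U} f R0"
    using R0 dpF_coloring_induced_iff[OF assms(2)] by simp
  ultimately show ?thesis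
    using ce assms(4) unfolding counterexample_def by blast
qed

lemma minimal_counterexample_extends_induced:
  assumes min: "minimal_counterexample V E pos curve C0 s HE f R0"
    and "set C0 \<subseteq> U" "U \<subset> V"
  shows "\<exists>R. dpF_coloring U s {h \<in> HE. \<forall>y\<in>h. fst y \<in> U} f R \<and> R0 \<subseteq> R"
proof (rule ccontr)
  assume "\<not> ?thesis"
  with assms have "counterexample U {e \<in> E. e \<subseteq> U} pos curve C0 s {h \<in> HE. \<forall>y\<in>h. fst y \<in> U} f R0"
    unfolding minimal_counterexample_def by (blast intro: counterexample_induced)
  with min have "card V \<le> card U"
    unfolding minimal_counterexample_def by blast
  moreover have "finite V"
    using min unfolding minimal_counterexample_def counterexample_def plane_graph_def simple_graph_def
    by blast
  ultimately show False
    using \<open>U \<subset> V\<close> psubset_card_mono by (metis not_le)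
qed

lemma minimal_counterexample_colors_outside_cycle:
  assumes min: "minimal_counterexample V E pos curve C0 s HE f R0"
    and cyc: "is_cycle E C" and disj: "set C \<inter> set C0 = {}"
  obtains rs where "representative (V - set C) s (set rs)" "distinct rs"
    "admissible_after HE f [] rs" "R0 \<subseteq> set rs"
proof -
  from min have sg: "simple_graph V E" and C0: "is_cycle E C0"
    unfolding minimal_counterexample_def counterexample_def plane_graph_def by simp_all
  have "set C0 \<subseteq> V - set C"
    using set_cycle_subset[OF sg C0] disj by blast
  moreover have "3 \<le> length C"
    using cyc unfolding is_cycle_def by simp
  then have "C ! 0 \<in> set C"
    by (intro nth_mem) linarith
  then have "V - set C \<subset> V"
    using set_cycle_subset[OF sg cyc] by blast
  ultimately obtain R where "dpF_coloring (V - set C) s {h \<in> HE. \<forall>y\<in>h. fst y \<in> V - set C} f R"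
    "R0 \<subseteq> R"
    using minimal_counterexample_extends_induced[OF min] by blast
  then have "dpF_coloring (V - set C) s HE f R"
    by (simp only: dpF_coloring_induced_iff[OF order_refl])
  with \<open>R0 \<subseteq> R\<close> show ?thesis
    using that unfolding dpF_coloring_iff_admissible by blast
qed

section \<open>Coloring along a cycle\<close>

text \<open>Here x_i is C ! (i - 1), and rs lists a DP-F-coloring of G - V(C) in an admissible order.\<close>
locale cycle_extension =
  fixes V :: "'v set" and E :: "'v set set" and s :: nat and HE :: "('v \<times> nat) set set"
    and f :: "nat \<Rightarrow> 'v \<Rightarrow> nat" and C :: "'v list" and rs :: "('v \<times> nat) list"
  assumes dp: "dp_cover V E s HE"
    and valid: "valid_F V s f"
    and graph: "simple_graph V E"
    and cycle: "is_cycle E C"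
    and cycle_in_V: "set C \<subseteq> V"
    and rs_rep: "representative (V - set C) s (set rs)"
    and rs_distinct: "distinct rs"
    and rs_admissible: "admissible_after HE f [] rs"
    and degree_le_4: "\<And>i. 1 \<le> i \<Longrightarrow> i < length C \<Longrightarrow> degree E (C ! i) \<le> 4"
    and first_outside: "card {w \<in> V - set C. {w, C ! 0} \<in> E} \<le> 1"
    and second_no_chord: "\<And>j. 3 \<le> j \<Longrightarrow> j < length C \<Longrightarrow> {C ! 1, C ! j} \<notin> E"
begin

lemma finite_V: "finite V"
  using graph unfolding simple_graph_def by simp

lemma finite_E: "finite E"
  using graph by (rule simple_graph_finite_edges)

lemma length_ge_3: "3 \<le> length C"
  using cycle unfolding is_cycle_def by simp

lemma cycle_nonempty [simp]: "C \<noteq> []"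
  using length_ge_3 by auto

lemma distinct_cycle: "distinct C"
  using cycle unfolding is_cycle_def by simp

lemma cycle_nth_eq_iff: "i < length C \<Longrightarrow> j < length C \<Longrightarrow> C ! i = C ! j \<longleftrightarrow> i = j"
  using distinct_cycle by (simp add: nth_eq_iff_index_eq)

lemma cycle_nth_in_V: "j < length C \<Longrightarrow> C ! j \<in> V"
  using cycle_in_V by auto

lemma cycle_succ_edge: "Suc j < length C \<Longrightarrow> {C ! j, C ! Suc j} \<in> E"
  using cycle_edge_mem[OF cycle, of j] by simp

lemma fst_rs: "fst ` set rs = V - set C"
  using rs_rep unfolding representative_def by force

lemma inj_on_fst_rs: "inj_on fst (set rs)"
  using rs_rep by (rule representative_inj_on_fst)

lemma sum_nbr_count_rs_le:
  assumes "j < length C" "card {w \<in> V - set C. {w, C ! j} \<in> E} \<le> b"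
  shows "(\<Sum>c\<in>{1..s}. nbr_count HE (set rs) (C ! j, c)) \<le> b"
  using sum_nbr_count_le[OF dp, of "set rs" "C ! j"] assms fst_rs cycle_nth_in_V
    card_filter_fst_eq[OF inj_on_fst_rs, of "\<lambda>w. {w, C ! j} \<in> E"]
  by simp

lemma second_outside: "card {w \<in> V - set C. {w, C ! 1} \<in> E} \<le> 2"
proof -
  have "C ! 0 \<in> set C" "C ! 2 \<in> set C"
    using length_ge_3 nth_mem[of 0 C] nth_mem[of 2 C] by linarith+
  moreover have "{C ! 0, C ! 1} \<in> E" "{C ! 2, C ! 1} \<in> E"
    using length_ge_3 cycle_succ_edge[of 0] cycle_succ_edge[of 1]
    by (simp_all add: insert_commute numeral_2_eq_2)
  ultimately have "card {w \<in> V - set C. {w, C ! 1} \<in> E} + card {C ! 0, C ! 2} \<le> degree E (C ! 1)"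
    using finite_V finite_E by (intro card_neighbors_add_le_degree) auto
  moreover have "card {C ! 0, C ! 2} = 2"
    using length_ge_3 cycle_nth_eq_iff[of 0 2] by simp
  ultimately show ?thesis
    using degree_le_4[of 1] length_ge_3 by simp
qed

lemma second_no_cover_edge: "3 \<le> j \<Longrightarrow> j < length C \<Longrightarrow> {(C ! 1, a), (C ! j, b)} \<notin> HE"
  using dp_cover_nonadj[OF dp] second_no_chord cycle_nth_in_V cycle_nth_eq_iff[of 1 j] by simp

lemma available_color:
  assumes "J \<subseteq> {..<length C}" "1 \<le> j" "j < length C" "j \<notin> J"
    and "i < length C" "i \<notin> J" "{C ! i, C ! j} \<in> E"
  shows "\<exists>c\<in>{1..s}. nbr_count HE (set rs \<union> (\<lambda>u. (C ! u, col u)) ` J) (C ! j, c) < f c (C ! j)"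
proof (rule exists_available_color[OF dp valid finite_E])
  let ?S = "set rs \<union> (\<lambda>u. (C ! u, col u)) ` J"
  have fst_S: "fst ` ?S = (V - set C) \<union> (\<lambda>u. C ! u) ` J"
    using fst_rs by (simp add: image_Un image_image)
  have outside: "C ! u \<notin> fst ` ?S" if "u < length C" "u \<notin> J" for u
    using that assms(1) cycle_nth_eq_iff unfolding fst_S by auto
  have "finite J"
    using assms(1) by (rule finite_subset) simp
  then show "finite ?S"
    by simp
  show "fst ` ?S \<subseteq> V" "C ! j \<in> V" "C ! j \<notin> fst ` ?S" "C ! i \<notin> fst ` ?S"
    using assms outside cycle_nth_in_V fst_S by auto
  have J_lt: "u < length C" if "u \<in> J" for u
    using assms(1) that by auto
  show "inj_on fst ?S"
    unfolding inj_on_Un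
  proof (intro conjI)
    show "inj_on fst ((\<lambda>u. (C ! u, col u)) ` J)"
      using J_lt cycle_nth_eq_iff by (auto simp: inj_on_def)
    have "fst ` (\<lambda>u. (C ! u, col u)) ` J \<subseteq> set C"
      using J_lt by auto
    then show "fst ` (set rs - (\<lambda>u. (C ! u, col u)) ` J) \<inter> fst ` ((\<lambda>u. (C ! u, col u)) ` J - set rs) = {}"
      using fst_rs by blast
  qed (rule inj_on_fst_rs)
  show "degree E (C ! j) \<le> 4" "{C ! i, C ! j} \<in> E"
    using assms degree_le_4 by auto
qed

text \<open>x_m, ..., x_(lo+1) are colored in this order; each still has its uncolored predecessor on C.\<close>
lemma color_path:
  assumes "2 \<le> lo"
  shows "\<exists>col. admissible_after HE f (rs @ [(C ! 0, c)]) (map (\<lambda>j. (C ! j, col j)) (rev [lo..<length C]))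
           \<and> (\<forall>j\<in>{lo..<length C}. col j \<in> {1..s})"
proof -
  have "\<exists>i\<in>{1..s}. nbr_count HE (set (rs @ [(C ! 0, c)]) \<union> (\<lambda>j. (C ! j, col j)) ` set (take t (rev [lo..<length C])))
          (C ! (rev [lo..<length C] ! t), i) < f i (C ! (rev [lo..<length C] ! t))"
    if "t < length (rev [lo..<length C])" for t col
  proof -
    define j where "j = length C - Suc t"
    have j: "rev [lo..<length C] ! t = j" "lo \<le> j" "j < length C"
      using that unfolding j_def by (auto simp: rev_nth)
    have "set (take t (rev [lo..<length C])) = {Suc j..<length C}"
      using that unfolding j_def by (auto simp: take_rev drop_upt)
    then have "set (rs @ [(C ! 0, c)]) \<union> (\<lambda>j. (C ! j, col j)) ` set (take t (rev [lo..<length C])) =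
        set rs \<union> (\<lambda>u. (C ! u, (col(0 := c)) u)) ` insert 0 {Suc j..<length C}"
      by auto
    moreover have "{C ! (j - 1), C ! j} \<in> E"
      using cycle_succ_edge[of "j - 1"] j(2,3) assms by simp
    then have "\<exists>i\<in>{1..s}. nbr_count HE (set rs \<union> (\<lambda>u. (C ! u, (col(0 := c)) u)) ` insert 0 {Suc j..<length C})
          (C ! j, i) < f i (C ! j)"
      using j(2,3) assms by (intro available_color[where i = "j - 1"]) auto
    ultimately show ?thesis
      using j(1) by simp
  qed
  then show ?thesis
    using admissible_greedy[of "rev [lo..<length C]" "{1..s}" HE "rs @ [(C ! 0, c)]" "\<lambda>j. C ! j" f]
    by simp
qed

lemma extends_along_order:
  assumes "map fst qs = map (\<lambda>j. C ! j) ord" "distinct ord" "set ord = {..<length C}"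
    and "snd ` set qs \<subseteq> {1..s}" "admissible_after HE f rs qs"
  shows "\<exists>R. dpF_coloring V s HE f R \<and> set rs \<subseteq> R"
proof -
  have "distinct (map fst qs)"
    using assms(1-3) distinct_cycle by (simp add: distinct_map inj_on_def nth_eq_iff_index_eq)
  moreover have "fst ` set qs = set C"
    using arg_cong[OF assms(1), of set] assms(3) by (metis map_nth set_map set_upt atLeast0LessThan)
  ultimately have "representative (set C) s (set qs)"
    using assms(4) by (rule representative_of_list)
  moreover have "distinct qs"
    using \<open>distinct (map fst qs)\<close> by (simp add: distinct_map)
  ultimately have "dpF_coloring ((V - set C) \<union> set C) s HE f (set (rs @ qs))"
    using rs_rep rs_distinct rs_admissible assms(5) by (intro dpF_coloring_append) auto
  moreover have "(V - set C) \<union> set C = V"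
    using cycle_in_V by blast
  ultimately show ?thesis
    by auto
qed

lemma sum_f_ge_4: "v \<in> V \<Longrightarrow> 4 \<le> (\<Sum>c\<in>{1..s}. f c v)"
  using valid unfolding valid_F_def by blast

lemma f_le_2: "v \<in> V \<Longrightarrow> c \<in> {1..s} \<Longrightarrow> f c v \<le> 2"
  using valid unfolding valid_F_def by fastforce

lemma first_budget: "(\<Sum>c\<in>{1..s}. nbr_count HE (set rs) (C ! 0, c)) \<le> 1"
  using first_outside by (intro sum_nbr_count_rs_le) auto

lemma second_budget: "(\<Sum>c\<in>{1..s}. nbr_count HE (set rs) (C ! 1, c)) \<le> 2"
  using second_outside length_ge_3 by (intro sum_nbr_count_rs_le) auto

lemma sum_nbr_count_first_le:
  assumes "finite T" "fst ` T \<subseteq> {C ! 1}"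
  shows "(\<Sum>c\<in>{1..s}. nbr_count HE T (C ! 0, c)) \<le> card T"
proof -
  have "C ! 1 \<in> V" "C ! 0 \<in> V" "C ! 0 \<noteq> C ! 1"
    using length_ge_3 cycle_nth_in_V cycle_nth_eq_iff[of 0 1] by auto
  with assms have "(\<Sum>c\<in>{1..s}. nbr_count HE T (C ! 0, c)) \<le> card {r \<in> T. {fst r, C ! 0} \<in> E}"
    by (intro sum_nbr_count_le[OF dp]) auto
  also have "\<dots> \<le> card T"
    using assms(1) by (intro card_mono) auto
  finally show ?thesis .
qed

text \<open>Color x_1 avoiding the color a of x_2, then x_m, ..., x_3 greedily and x_2 last: besides
  its neighbors off C, x_2 then only sees x_3.\<close>
lemma extension_if_second_has_slack:
  assumes a: "a \<in> {1..s}" "nbr_count HE (set rs) (C ! 1, a) + 2 \<le> f a (C ! 1)"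
  shows "\<exists>R. dpF_coloring V s HE f R \<and> set rs \<subseteq> R"
proof -
  have "(\<Sum>c\<in>{1..s}. nbr_count HE {(C ! 1, a)} (C ! 0, c)) \<le> 1"
    using sum_nbr_count_first_le[of "{(C ! 1, a)}"] by simp
  then have "(\<Sum>c\<in>{1..s}. nbr_count HE (set rs) (C ! 0, c) + 2 * nbr_count HE {(C ! 1, a)} (C ! 0, c))
      < (\<Sum>c\<in>{1..s}. f c (C ! 0))"
    using first_budget sum_f_ge_4[OF cycle_nth_in_V[of 0]]
    by (simp add: sum.distrib sum_distrib_left[symmetric])
  then obtain c where c: "c \<in> {1..s}"
    "nbr_count HE (set rs) (C ! 0, c) + 2 * nbr_count HE {(C ! 1, a)} (C ! 0, c) < f c (C ! 0)"
    by (blast dest: sum_less_sumD)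
  moreover have "f c (C ! 0) \<le> 2"
    using c(1) by (simp add: f_le_2 cycle_nth_in_V)
  ultimately have first_ok: "nbr_count HE (set rs) (C ! 0, c) < f c (C ! 0)"
    and independent: "{(C ! 1, a), (C ! 0, c)} \<notin> HE"
    by (auto simp: nbr_count_singleton split: if_splits)
  obtain col where col: "admissible_after HE f (rs @ [(C ! 0, c)]) (map (\<lambda>j. (C ! j, col j)) (rev [2..<length C]))"
    "\<forall>j\<in>{2..<length C}. col j \<in> {1..s}"
    using color_path[of 2 c] by auto
  define P where "P = map (\<lambda>j. (C ! j, col j)) (rev [2..<length C])"
  have "set (rs @ [(C ! 0, c)] @ P) =
      (set rs \<union> {(C ! 2, col 2)}) \<union> ({(C ! 0, c)} \<union> (\<lambda>j. (C ! j, col j)) ` {3..<length C})"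
  proof -
    have "{2..<length C} = insert 2 {3..<length C}"
      using length_ge_3 by auto
    then show ?thesis
      unfolding P_def by auto
  qed
  moreover have "\<forall>y \<in> {(C ! 0, c)} \<union> (\<lambda>j. (C ! j, col j)) ` {3..<length C}. {y, (C ! 1, a)} \<notin> HE"
    using independent second_no_cover_edge by (auto simp: insert_commute)
  ultimately have "nbr_count HE (set (rs @ [(C ! 0, c)] @ P)) (C ! 1, a)
      = nbr_count HE (set rs \<union> {(C ! 2, col 2)}) (C ! 1, a)"
    by (simp only: nbr_count_Un_nonadj)
  also have "\<dots> \<le> nbr_count HE (set rs) (C ! 1, a) + 1"
    using nbr_count_Un_le[of "set rs" "{(C ! 2, col 2)}" HE "(C ! 1, a)"]
    by (simp add: nbr_count_singleton split: if_splits)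
  finally have second_ok: "nbr_count HE (set (rs @ [(C ! 0, c)] @ P)) (C ! 1, a) < f a (C ! 1)"
    using a(2) by simp
  show ?thesis
  proof (rule extends_along_order)
    show "map fst ([(C ! 0, c)] @ P @ [(C ! 1, a)]) = map (\<lambda>j. C ! j) ([0] @ rev [2..<length C] @ [1])"
      unfolding P_def by simp
    show "distinct ([0] @ rev [2..<length C] @ [1])" "set ([0] @ rev [2..<length C] @ [1]) = {..<length C}"
      using length_ge_3 by auto
    show "snd ` set ([(C ! 0, c)] @ P @ [(C ! 1, a)]) \<subseteq> {1..s}"
      using a(1) c(1) col(2) unfolding P_def by auto
    show "admissible_after HE f rs ([(C ! 0, c)] @ P @ [(C ! 1, a)])"
      using first_ok col(1) second_ok unfolding P_def[symmetric]
      by (simp add: admissible_after_Cons admissible_after_append admissible_after_single)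
  qed
qed


text \<open>Color x_2 and x_1, then x_m, ..., x_4 greedily and x_3 last. The color p of x_3 is chosen as
  if x_2 were uncolored, and x_2 takes whichever of its two candidate colors is not matched with
  (x_3, p); x_1 gets a color compatible with both candidates.\<close>
lemma extension_if_second_has_two_choices:
  assumes a: "a \<in> {1..s}" "nbr_count HE (set rs) (C ! 1, a) < f a (C ! 1)"
    and a': "a' \<in> {1..s}" "nbr_count HE (set rs) (C ! 1, a') < f a' (C ! 1)"
    and "a \<noteq> a'"
  shows "\<exists>R. dpF_coloring V s HE f R \<and> set rs \<subseteq> R"
proof -
  let ?T = "{(C ! 1, a), (C ! 1, a')}"
  have "(\<Sum>c\<in>{1..s}. nbr_count HE ?T (C ! 0, c)) \<le> 2"
    using sum_nbr_count_first_le[of ?T] card_insert_le_m1[of 2 "{(C ! 1, a')}" "(C ! 1, a)"] by simp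
  then have "(\<Sum>c\<in>{1..s}. nbr_count HE (set rs) (C ! 0, c) + nbr_count HE ?T (C ! 0, c))
      < (\<Sum>c\<in>{1..s}. f c (C ! 0))"
    using first_budget sum_f_ge_4[OF cycle_nth_in_V[of 0]] by (simp add: sum.distrib)
  then obtain c where c: "c \<in> {1..s}"
    "nbr_count HE (set rs) (C ! 0, c) + nbr_count HE ?T (C ! 0, c) < f c (C ! 0)"
    by (blast dest: sum_less_sumD)
  have first_ok: "nbr_count HE (set (rs @ [(C ! 1, \<alpha>)])) (C ! 0, c) < f c (C ! 0)" if "\<alpha> \<in> {a, a'}" for \<alpha>
  proof -
    have "nbr_count HE (set (rs @ [(C ! 1, \<alpha>)])) (C ! 0, c) \<le> nbr_count HE (set rs \<union> ?T) (C ! 0, c)"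
      using that by (intro nbr_count_mono) auto
    also have "\<dots> \<le> nbr_count HE (set rs) (C ! 0, c) + nbr_count HE ?T (C ! 0, c)"
      by (intro nbr_count_Un_le) auto
    finally show ?thesis
      using c(2) by simp
  qed
  obtain col where col: "admissible_after HE f (rs @ [(C ! 0, c)]) (map (\<lambda>j. (C ! j, col j)) (rev [3..<length C]))"
    "\<forall>j\<in>{3..<length C}. col j \<in> {1..s}"
    using color_path[of 3 c] by auto
  define P where "P = map (\<lambda>j. (C ! j, col j)) (rev [3..<length C])"
  have "set (rs @ [(C ! 0, c)] @ P) = set rs \<union> (\<lambda>u. (C ! u, (col(0 := c)) u)) ` insert 0 {3..<length C}"
    unfolding P_def by auto
  moreover have "\<exists>p\<in>{1..s}. nbr_count HE (set rs \<union> (\<lambda>u. (C ! u, (col(0 := c)) u)) ` insert 0 {3..<length C})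
      (C ! 2, p) < f p (C ! 2)"
    using length_ge_3 cycle_succ_edge[of 1] by (intro available_color[where i = 1]) (auto simp: numeral_2_eq_2)
  ultimately obtain p where p: "p \<in> {1..s}" "nbr_count HE (set (rs @ [(C ! 0, c)] @ P)) (C ! 2, p) < f p (C ! 2)"
    by auto
  obtain \<alpha> where \<alpha>: "\<alpha> \<in> {a, a'}" "{(C ! 1, \<alpha>), (C ! 2, p)} \<notin> HE"
  proof -
    have "C ! 2 \<in> V" "C ! 1 \<in> V" "C ! 2 \<noteq> C ! 1"
      using length_ge_3 cycle_nth_in_V cycle_nth_eq_iff[of 2 1] by auto
    then have "\<not> ({(C ! 2, p), (C ! 1, a)} \<in> HE \<and> {(C ! 2, p), (C ! 1, a')} \<in> HE)"
      using dp_cover_matching[OF dp] \<open>a \<noteq> a'\<close> by blast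
    then show ?thesis
      using that by (auto simp: insert_commute)
  qed
  have second_ok: "nbr_count HE (set rs) (C ! 1, \<alpha>) < f \<alpha> (C ! 1)"
    using \<alpha>(1) a a' by auto
  have path_ok: "admissible_after HE f (rs @ [(C ! 1, \<alpha>), (C ! 0, c)]) P"
  proof (rule admissible_after_insert_nonadj[OF col(1)[folded P_def]])
    show "set (rs @ [(C ! 1, \<alpha>), (C ! 0, c)]) = insert (C ! 1, \<alpha>) (set (rs @ [(C ! 0, c)]))"
      by auto
    show "\<forall>x\<in>set P. {(C ! 1, \<alpha>), x} \<notin> HE"
      unfolding P_def using second_no_cover_edge by auto
  qed
  have "set (rs @ [(C ! 1, \<alpha>), (C ! 0, c)] @ P) = set (rs @ [(C ! 0, c)] @ P) \<union> {(C ! 1, \<alpha>)}"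
    by auto
  then have "nbr_count HE (set (rs @ [(C ! 1, \<alpha>), (C ! 0, c)] @ P)) (C ! 2, p)
      = nbr_count HE (set (rs @ [(C ! 0, c)] @ P)) (C ! 2, p)"
    using \<alpha>(2) by (simp only:) (rule nbr_count_Un_nonadj, simp)
  with p(2) have third_ok: "nbr_count HE (set (rs @ [(C ! 1, \<alpha>), (C ! 0, c)] @ P)) (C ! 2, p) < f p (C ! 2)"
    by simp
  show ?thesis
  proof (rule extends_along_order)
    show "map fst ([(C ! 1, \<alpha>), (C ! 0, c)] @ P @ [(C ! 2, p)])
        = map (\<lambda>j. C ! j) ([1, 0] @ rev [3..<length C] @ [2])"
      unfolding P_def by simp
    show "distinct ([1, 0] @ rev [3..<length C] @ [2])" "set ([1, 0] @ rev [3..<length C] @ [2]) = {..<length C}"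
      using length_ge_3 by auto
    show "snd ` set ([(C ! 1, \<alpha>), (C ! 0, c)] @ P @ [(C ! 2, p)]) \<subseteq> {1..s}"
      using \<alpha>(1) a(1) a'(1) c(1) p(1) col(2) unfolding P_def by auto
    show "admissible_after HE f rs ([(C ! 1, \<alpha>), (C ! 0, c)] @ P @ [(C ! 2, p)])"
      using second_ok first_ok[OF \<alpha>(1)] path_ok third_ok
      by (simp add: admissible_after_Cons admissible_after_append admissible_after_single)
  qed
qed

theorem extension: "\<exists>R. dpF_coloring V s HE f R \<and> set rs \<subseteq> R"
proof (cases "\<exists>a\<in>{1..s}. \<exists>a'\<in>{1..s}. a \<noteq> a' \<and>
    nbr_count HE (set rs) (C ! 1, a) < f a (C ! 1) \<and> nbr_count HE (set rs) (C ! 1, a') < f a' (C ! 1)")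
  case True
  then show ?thesis
    using extension_if_second_has_two_choices by blast
next
  case False
  have sum_f: "4 \<le> (\<Sum>i\<in>{1..s}. f i (C ! 1))"
    using length_ge_3 by (intro sum_f_ge_4 cycle_nth_in_V) simp
  with second_budget have "(\<Sum>i\<in>{1..s}. nbr_count HE (set rs) (C ! 1, i)) < (\<Sum>i\<in>{1..s}. f i (C ! 1))"
    by linarith
  then obtain a where a: "a \<in> {1..s}" "nbr_count HE (set rs) (C ! 1, a) < f a (C ! 1)"
    by (blast dest: sum_less_sumD)
  with False have "f i (C ! 1) \<le> nbr_count HE (set rs) (C ! 1, i)" if "i \<in> {1..s} - {a}" for i
    using that by force
  then have "(\<Sum>i\<in>{1..s} - {a}. f i (C ! 1)) \<le> (\<Sum>i\<in>{1..s} - {a}. nbr_count HE (set rs) (C ! 1, i))"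
    by (rule sum_mono)
  moreover have "(\<Sum>i\<in>{1..s}. f i (C ! 1)) = f a (C ! 1) + (\<Sum>i\<in>{1..s} - {a}. f i (C ! 1))"
    "(\<Sum>i\<in>{1..s}. nbr_count HE (set rs) (C ! 1, i))
      = nbr_count HE (set rs) (C ! 1, a) + (\<Sum>i\<in>{1..s} - {a}. nbr_count HE (set rs) (C ! 1, i))"
    using a(1) by (simp_all add: sum.remove)
  ultimately have "nbr_count HE (set rs) (C ! 1, a) + 2 \<le> f a (C ! 1)"
    using sum_f second_budget by linarith
  with a(1) show ?thesis
    by (rule extension_if_second_has_slack)
qed

end

theorem lemma8:
  fixes V :: "'v set" and E :: "'v set set" and pos :: "'v \<Rightarrow> complex"
    and curve :: "'v set \<Rightarrow> real \<Rightarrow> complex" and C0 C :: "'v list"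
    and s k :: nat and HE :: "('v \<times> nat) set set"
    and f :: "nat \<Rightarrow> 'v \<Rightarrow> nat" and R0 :: "('v \<times> nat) set"
  assumes min: "minimal_counterexample V E pos curve C0 s HE f R0"
    and cyc: "is_cycle E C"
    and disj: "set C \<inter> set C0 = {}"
    and k: "k \<ge> 1"
    and chords: "card ({e \<in> E. e \<subseteq> set C} - cycle_edges C) = k - 1"
    and chords_inside: "\<forall>e \<in> {e \<in> E. e \<subseteq> set C} - cycle_edges C.
                          edge_inside pos curve C e \<and> C ! 0 \<in> e"
    and x2_or_xm: "(\<forall>e \<in> {e \<in> E. e \<subseteq> set C} - cycle_edges C. C ! 1 \<notin> e)
                 \<or> (\<forall>e \<in> {e \<in> E. e \<subseteq> set C} - cycle_edges C. last C \<notin> e)"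
    and degG: "degree E (C ! 0) \<le> k + 2"
    and degK: "degree {e \<in> E. e \<subseteq> set C} (C ! 0) = k + 1"
  shows "\<exists>i. 1 \<le> i \<and> i < length C \<and> degree E (C ! i) \<ge> 5"
proof (rule ccontr)
  assume "\<not> ?thesis"
  then have degree_le_4: "degree E (C ! i) \<le> 4" if "1 \<le> i" "i < length C" for i
    using that by force
  from min have sg: "simple_graph V E" and dp: "dp_cover V E s HE" and valid: "valid_F V s f"
    and no_ext: "\<not> (\<exists>R. dpF_coloring V s HE f R \<and> R0 \<subseteq> R)"
    unfolding minimal_counterexample_def counterexample_def plane_graph_def by simp_all
  obtain rs where rs: "representative (V - set C) s (set rs)" "distinct rs"
    "admissible_after HE f [] rs" "R0 \<subseteq> set rs"
    using minimal_counterexample_colors_outside_cycle[OF min cyc disj] .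
  have "3 \<le> length C"
    using cyc unfolding is_cycle_def by simp
  then have "C ! 0 \<in> set C"
    by (intro nth_mem) linarith
  then have "card {w \<in> V - set C. {w, C ! 0} \<in> E} + degree {e \<in> E. e \<subseteq> set C} (C ! 0) \<le> degree E (C ! 0)"
    using simple_graph_finite_edges[OF sg] by (intro degree_outside_add_induced_le) auto
  with degG degK have "card {w \<in> V - set C. {w, C ! 0} \<in> E} \<le> 1"
    by simp
  moreover have "{C ! 1, C ! j} \<notin> E" if "3 \<le> j" "j < length C" for j
    using no_chord_at_second_vertex[OF cyc _ that] chords_inside by blast
  ultimately interpret cycle_extension V E s HE f C rs
    using dp valid sg cyc set_cycle_subset[OF sg cyc] rs(1-3) degree_le_4 by unfold_locales auto
  from extension no_ext rs(4) show False
    by blast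
qed

end
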